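(* If a graph $G$ is $\mathbb{Z}_3$-colorable, then $G$ is $\mathbb{Z}_5$-colorable.
   Context: Graphs are finite, may have multiple edges but no loops. For an Abelian group $\Gamma$, $G$ is $\Gamma$-colorable if for some (equivalently, any) orientation $D$ of $G$ and every $\varphi:E(G)\to\Gamma$ there is $c:V(G)\to\Gamma$ with $c(w)-c(u)\neq\varphi(uw)$ for every directed edge $uw$ of $D$. *)

theory Defs
  imports Main "HOL-Library.Numeral_Type"
begin

text \<open>A finite loopless multigraph G, given together with an orientation D:
  vertex set V, edge set E, each edge e directed from src e to tgt e.\<close>

definition loopless_multigraph :: "'v set \<Rightarrow> 'e set \<Rightarrow> ('e \<Rightarrow> 'v) \<Rightarrow> ('e \<Rightarrow> 'v) \<Rightarrow> bool" where
  "loopless_multigraph V E src tgt \<longleftrightarrow>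
     finite V \<and> finite E \<and> (\<forall>e\<in>E. src e \<in> V \<and> tgt e \<in> V \<and> src e \<noteq> tgt e)"

text \<open>Gamma-colorability (group colorability) w.r.t. the orientation given by src/tgt;
  the abelian group Gamma is the type 'g.\<close>

definition group_colorable ::
  "'v set \<Rightarrow> 'e set \<Rightarrow> ('e \<Rightarrow> 'v) \<Rightarrow> ('e \<Rightarrow> 'v) \<Rightarrow> 'g::ab_group_add itself \<Rightarrow> bool" where
  "group_colorable V E src tgt (_::'g itself) \<longleftrightarrow>
     (\<forall>\<phi>::'e \<Rightarrow> 'g. \<exists>c::'v \<Rightarrow> 'g. \<forall>e\<in>E. c (tgt e) - c (src e) \<noteq> \<phi> e)"

end

theory Submission
  imports Defs
begin

text \<open>Colorings can be pulled back along a pair of maps \<open>g : \<Gamma> \<rightarrow> \<Gamma>'\<close>, \<open>f : \<Gamma>' \<rightarrow> \<Gamma>\<close>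
  with \<open>f (g a - g b) = a - b\<close>: a \<open>\<Gamma>'\<close>-labelling \<open>\<psi>\<close> becomes the \<open>\<Gamma>\<close>-labelling \<open>f \<circ> \<psi>\<close>, and
  \<open>g\<close> carries a \<open>\<Gamma>\<close>-coloring avoiding \<open>f \<circ> \<psi>\<close> to a \<open>\<Gamma>'\<close>-coloring avoiding \<open>\<psi>\<close>.
  For \<open>\<int>\<^sub>3 \<rightarrow> \<int>\<^sub>5\<close> take \<open>g\<close> to send \<open>0, 1, 2\<close> to \<open>0, 1, 2\<close>: the differences of two
  such representatives lie in \<open>{-2..2}\<close>, which embeds into \<open>\<int>\<^sub>5\<close>, so the difference in
  \<open>\<int>\<^sub>5\<close> determines the difference in \<open>\<int>\<^sub>3\<close>.\<close>

lemma group_colorable_transfer: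
  fixes f :: "'h::ab_group_add \<Rightarrow> 'g::ab_group_add" and g :: "'g \<Rightarrow> 'h"
    and V :: "'v set" and E :: "'e set" and src tgt :: "'e \<Rightarrow> 'v"
  assumes f_diff: "\<And>a b. f (g a - g b) = a - b"
    and "group_colorable V E src tgt TYPE('g)"
  shows "group_colorable V E src tgt TYPE('h)"
  unfolding group_colorable_def
proof
  fix \<psi> :: "'e \<Rightarrow> 'h"
  obtain c :: "'v \<Rightarrow> 'g" where c: "\<forall>e\<in>E. c (tgt e) - c (src e) \<noteq> f (\<psi> e)"
    using assms(2) spec[where x = "\<lambda>e. f (\<psi> e)"] unfolding group_colorable_def by blast
  have "\<forall>e\<in>E. g (c (tgt e)) - g (c (src e)) \<noteq> \<psi> e"
    using c f_diff by metis
  then show "\<exists>c'::'v \<Rightarrow> 'h. \<forall>e\<in>E. c' (tgt e) - c' (src e) \<noteq> \<psi> e"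
    by (intro exI[of _ "\<lambda>v. g (c v)"]) simp
qed

lemma num3_cases: "(a::3) = 0 \<or> a = 1 \<or> a = 2"
proof (cases a)
  case (of_int z)
  then have "z = 0 \<or> z = 1 \<or> z = 2" by auto
  then show ?thesis using of_int by auto
qed

definition embed_3_5 :: "3 \<Rightarrow> 5" where
  "embed_3_5 a = (if a = 0 then 0 else if a = 1 then 1 else 2)"

definition diff_5_3 :: "5 \<Rightarrow> 3" where
  "diff_5_3 x = (if x = 0 then 0 else if x = 1 then 1 else if x = 2 then 2 else if x = 3 then 1 else 2)"

lemma diff_5_3_embed_3_5: "diff_5_3 (embed_3_5 a - embed_3_5 b) = a - b"
  using num3_cases[of a] num3_cases[of b] by (auto simp: embed_3_5_def diff_5_3_def)

theorem proposition7p7: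
  fixes V :: "'v set" and E :: "'e set" and src tgt :: "'e \<Rightarrow> 'v"
  assumes "loopless_multigraph V E src tgt"
    and "group_colorable V E src tgt TYPE(3)"
  shows "group_colorable V E src tgt TYPE(5)"
  using group_colorable_transfer[OF diff_5_3_embed_3_5 assms(2)] .

end
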